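(* Let $I$ be a strongly stable ideal of $R=K[x_1,\ldots,x_n]$. Then the following are equivalent: (1) $R/I$ has the weak Lefschetz property; (2) (a) the Hilbert function of $R/I$ is unimodal, $h_0<h_1<\cdots<h_k\ge h_{k+1}\ge\cdots\ge h_s$, (b) $(x_1,\ldots,x_{n-1})^{k+1}\subseteq I$, and (c) every minimal monomial generator $M$ of $I$ that is divisible by $x_n$ has $\deg M\ge k+1$.
   Context: $K$ is an infinite field of characteristic $0$. A monomial ideal $I$ is strongly stable if for every monomial $M\in I$ and every variable $x_k$ dividing $M$, $(x_i/x_k)M\in I$ for all $i<k$. A standard graded algebra $A$ (Artinian in the paper) has the weak Lefschetz property if there is $\ell\in A_1$ such that multiplication $\times\ell:A_d\to A_{d+1}$ has maximal rank (is injective or surjective) for all $d\ge1$. $h_d=\dim_K(R/I)_d$; in (a) $k$ is the index at which the Hilbert function stops strictly increasing. *)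

theory Defs
  imports Main "HOL-Library.Poly_Mapping"
begin

text \<open>Variable x_(i+1) of the paper is index i here,
  so R = K[x_1,...,x_n] consists of the polynomials whose monomials only involve indices < n.\<close>

type_synonym 'a mpoly = "(nat \<Rightarrow>\<^sub>0 nat) \<Rightarrow>\<^sub>0 'a"

definition var_exp :: "nat \<Rightarrow> (nat \<Rightarrow>\<^sub>0 nat)" where
  "var_exp i = Poly_Mapping.single i 1"

definition mon :: "'a::zero \<Rightarrow> (nat \<Rightarrow>\<^sub>0 nat) \<Rightarrow> 'a mpoly" where
  "mon c m = Poly_Mapping.single m c"

definition mdeg :: "(nat \<Rightarrow>\<^sub>0 nat) \<Rightarrow> nat" where
  "mdeg m = (\<Sum>i\<in>Poly_Mapping.keys m. Poly_Mapping.lookup m i)"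

definition polyR :: "nat \<Rightarrow> ('a::field) mpoly set" where
  "polyR n = {f. \<forall>m\<in>Poly_Mapping.keys f. Poly_Mapping.keys m \<subseteq> {..<n}}"

definition homog :: "nat \<Rightarrow> nat \<Rightarrow> ('a::field) mpoly set" where
  "homog n d = {f \<in> polyR n. \<forall>m\<in>Poly_Mapping.keys f. mdeg m = d}"

definition is_ideal :: "nat \<Rightarrow> ('a::field) mpoly set \<Rightarrow> bool" where
  "is_ideal n I \<longleftrightarrow> I \<subseteq> polyR n \<and> 0 \<in> I \<and> (\<forall>f\<in>I. \<forall>g\<in>I. f + g \<in> I)
     \<and> (\<forall>r\<in>polyR n. \<forall>f\<in>I. r * f \<in> I)"

definition ideal_gen :: "nat \<Rightarrow> ('a::field) mpoly set \<Rightarrow> 'a mpoly set" where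
  "ideal_gen n S = \<Inter>{J. is_ideal n J \<and> S \<subseteq> J}"

fun ideal_pow :: "nat \<Rightarrow> ('a::field) mpoly set \<Rightarrow> nat \<Rightarrow> 'a mpoly set" where
  "ideal_pow n J 0 = polyR n"
| "ideal_pow n J (Suc k) = ideal_gen n {f * g | f g. f \<in> J \<and> g \<in> ideal_pow n J k}"

text \<open>Monomial ideal: an ideal containing every monomial occurring in any of its elements
  (equivalently, generated by monomials).\<close>
definition monomial_ideal :: "nat \<Rightarrow> ('a::field) mpoly set \<Rightarrow> bool" where
  "monomial_ideal n I \<longleftrightarrow> is_ideal n I \<and> (\<forall>f\<in>I. \<forall>m\<in>Poly_Mapping.keys f. mon 1 m \<in> I)"

definition strongly_stable :: "nat \<Rightarrow> ('a::field) mpoly set \<Rightarrow> bool" where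
  "strongly_stable n I \<longleftrightarrow> monomial_ideal n I \<and>
     (\<forall>m. mon 1 m \<in> I \<longrightarrow> (\<forall>k. 0 < Poly_Mapping.lookup m k \<longrightarrow>
        (\<forall>i<k. mon 1 (var_exp i + (m - var_exp k)) \<in> I)))"

definition indep_mod :: "('a::field) mpoly set \<Rightarrow> 'a mpoly set \<Rightarrow> bool" where
  "indep_mod I S \<longleftrightarrow> (\<forall>c. (\<Sum>f\<in>S. mon (c f) 0 * f) \<in> I \<longrightarrow> (\<forall>f\<in>S. c f = 0))"

text \<open>Hilbert function: h_d = dim_K (R/I)_d = dim_K (R_d / I_d).\<close>
definition hilb :: "nat \<Rightarrow> ('a::field) mpoly set \<Rightarrow> nat \<Rightarrow> nat" where
  "hilb n I d = (GREATEST k. \<exists>S. finite S \<and> S \<subseteq> homog n d \<and> card S = k \<and> indep_mod I S)"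

definition artinian_quot :: "nat \<Rightarrow> ('a::field) mpoly set \<Rightarrow> bool" where
  "artinian_quot n I \<longleftrightarrow> (\<exists>D. \<forall>d\<ge>D. homog n d \<subseteq> I)"

text \<open>Weak Lefschetz property of R/I: some linear form l gives multiplication maps
  (R/I)_d \<rightarrow> (R/I)_(d+1) of maximal rank (injective or surjective) for all d \<ge> 1.\<close>
definition WLP :: "nat \<Rightarrow> ('a::field) mpoly set \<Rightarrow> bool" where
  "WLP n I \<longleftrightarrow> (\<exists>l\<in>homog n 1. \<forall>d\<ge>1.
      (\<forall>f\<in>homog n d. l * f \<in> I \<longrightarrow> f \<in> I) \<or>
      (\<forall>g\<in>homog n (d+1). \<exists>f\<in>homog n d. g - l * f \<in> I))"

definition min_mon_gen :: "nat \<Rightarrow> ('a::field) mpoly set \<Rightarrow> (nat \<Rightarrow>\<^sub>0 nat) \<Rightarrow> bool" where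
  "min_mon_gen n I m \<longleftrightarrow> mon 1 m \<in> I \<and>
     (\<forall>m'. mon 1 m' \<in> I \<and> (\<forall>i. Poly_Mapping.lookup m' i \<le> Poly_Mapping.lookup m i) \<longrightarrow> m' = m)"

end

theory Submission
  imports Defs "HOL.Vector_Spaces"
begin

text \<open>
  For a strongly stable ideal the last variable x_n is as good a Lefschetz element as any linear
  form: if x_n u \<in> I, then moving the exponent of x_n to any x_i gives \<ell> u \<in> I for every linear \<ell>.
  Multiplication by x_n sends standard monomials to standard monomials or into I, so its maximal
  rank in degree d is combinatorial: it is injective iff x_n u \<notin> I for all standard monomials u of
  degree d, and surjective iff every standard monomial of degree d+1 involves x_n, i.e. iff all
  monomials of degree d+1 in x_1,...,x_(n-1) lie in I. For an arbitrary \<ell> the same two conditions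
  follow from injectivity resp. surjectivity of multiplication by \<ell>, the latter by a dimension count.
  Surjectivity propagates to higher degrees, so the weak Lefschetz property holds iff
  multiplication by x_n is injective below some degree k and surjective from k on. Injectivity
  below k is condition (c), surjectivity in degree k is condition (b), and comparing the numbers
  of standard monomials, which are the values of the Hilbert function, gives (a). The argument
  works over any field.
\<close>

section \<open>Monomials and polynomials\<close>

lemma mon_mult: "mon a m * mon b m' = mon (a * b) (m + m')"
  by (simp add: mon_def mult_single)

lemma lookup_mon: "Poly_Mapping.lookup (mon c m) k = (if k = m then c else 0)"
  by (simp add: mon_def lookup_single when_def)

lemma keys_mon_subset: "Poly_Mapping.keys (mon c m) \<subseteq> {m}"
  by (simp add: mon_def)

lemma mon_one_eq_iff: "mon (1::'a::zero_neq_one) a = mon 1 b \<longleftrightarrow> a = b"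
  by (metis lookup_mon one_neq_zero)

lemma lookup_sum_mon:
  assumes "finite A" "inj_on h A"
  shows "Poly_Mapping.lookup (\<Sum>a\<in>A. mon (g a) (h a)) k
           = (if k \<in> h ` A then g (the_inv_into A h k) else 0)"
  using assms
proof (induction A rule: finite_induct)
  case empty
  then show ?case by simp
next
  case (insert x F)
  have injF: "inj_on h F" and hx: "h x \<notin> h ` F"
    using insert by (auto simp: inj_on_def)
  have inv_F: "the_inv_into (insert x F) h k = the_inv_into F h k" if "k \<in> h ` F"
    using that insert.prems injF by (auto simp: the_inv_into_f_f)
  show ?case
  proof (cases "k = h x")
    case True
    then have "the_inv_into (insert x F) h k = x"
      using insert.prems by (simp add: the_inv_into_f_f)
    then show ?thesis using insert injF True hx by (simp add: lookup_add lookup_mon)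
  next
    case False
    then show ?thesis using insert injF inv_F by (auto simp: lookup_add lookup_mon)
  qed
qed

lemma lookup_sum_mon_id:
  assumes "finite A"
  shows "Poly_Mapping.lookup (\<Sum>a\<in>A. mon (g a) a) k = (if k \<in> A then g k else 0)"
  using lookup_sum_mon[OF assms, of id g k] the_inv_into_f_f[of id A k] by auto

lemma poly_expand: "f = (\<Sum>m\<in>Poly_Mapping.keys f. mon (Poly_Mapping.lookup f m) m)"
  by (rule poly_mapping_eqI) (simp add: lookup_sum_mon_id in_keys_iff)

lemma lookup_mon_times:
  "Poly_Mapping.lookup (mon (1::'a::comm_semiring_1) a * f) (a + k) = Poly_Mapping.lookup f k"
proof -
  have "mon 1 a * f = (\<Sum>m\<in>Poly_Mapping.keys f. mon (Poly_Mapping.lookup f m) (a + m))"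
    by (subst poly_expand[of f]) (simp add: sum_distrib_left mon_mult)
  also have "Poly_Mapping.lookup \<dots> (a + k) = Poly_Mapping.lookup f k"
    by (subst lookup_sum_mon) (auto simp: inj_on_def in_keys_iff the_inv_into_f_f)
  finally show ?thesis .
qed

lemma lookup_scale: "Poly_Mapping.lookup (mon c 0 * f) k = c * Poly_Mapping.lookup f k"
proof -
  have "mon c 0 * f = (\<Sum>m\<in>Poly_Mapping.keys f. mon (c * Poly_Mapping.lookup f m) m)"
    by (subst poly_expand[of f]) (simp add: sum_distrib_left mon_mult)
  then show ?thesis by (simp add: lookup_sum_mon_id in_keys_iff)
qed

lemma keys_var_exp: "Poly_Mapping.keys (var_exp i) = {i}"
  by (simp add: var_exp_def)

lemma lookup_var_exp_add_pos: "0 < Poly_Mapping.lookup (var_exp k + u) k"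
  by (simp add: lookup_add var_exp_def)

lemma keys_add_exp:
  "Poly_Mapping.keys ((a::nat \<Rightarrow>\<^sub>0 nat) + b) = Poly_Mapping.keys a \<union> Poly_Mapping.keys b"
  by (auto simp: in_keys_iff lookup_add)

lemma keys_diff_exp: "Poly_Mapping.keys ((a::nat \<Rightarrow>\<^sub>0 nat) - b) \<subseteq> Poly_Mapping.keys a"
  by (auto simp: in_keys_iff lookup_minus)

lemma add_diff_cancel_left_exp: "((a::nat \<Rightarrow>\<^sub>0 nat) + b) - a = b"
  by (rule poly_mapping_eqI) (simp add: lookup_add lookup_minus)

lemma exp_decomp:
  assumes "\<forall>i. Poly_Mapping.lookup a i \<le> Poly_Mapping.lookup (b::nat \<Rightarrow>\<^sub>0 nat) i"
  shows "b = a + (b - a)"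
  by (rule poly_mapping_eqI) (use assms in \<open>simp add: lookup_add lookup_minus\<close>)

lemma var_exp_decomp: "0 < Poly_Mapping.lookup w k \<Longrightarrow> w = var_exp k + (w - var_exp k)"
  by (rule exp_decomp) (auto simp: var_exp_def lookup_single when_def)

lemma mdeg_eq_sum:
  "finite S \<Longrightarrow> Poly_Mapping.keys m \<subseteq> S \<Longrightarrow> mdeg m = (\<Sum>i\<in>S. Poly_Mapping.lookup m i)"
  unfolding mdeg_def by (rule sum.mono_neutral_left) (auto simp: in_keys_iff)

lemma mdeg_add: "mdeg (a + b) = mdeg a + mdeg b"
  using keys_add[of a b]
  by (simp add: mdeg_eq_sum[of "Poly_Mapping.keys a \<union> Poly_Mapping.keys b"] lookup_add sum.distrib)

lemma mdeg_var_exp: "mdeg (var_exp i) = 1"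
  by (simp add: mdeg_def var_exp_def)

lemma mdeg_eq_0_iff: "mdeg m = 0 \<longleftrightarrow> m = 0"
  by (auto simp: mdeg_def in_keys_iff intro: poly_mapping_eqI)

lemma mdeg_pos_imp: "0 < mdeg m \<Longrightarrow> \<exists>i. 0 < Poly_Mapping.lookup m i"
  by (metis mdeg_eq_0_iff gr0I keys_eq_empty in_keys_iff equals0I)

lemma mdeg_eq_1_imp:
  assumes "mdeg m = 1"
  shows "\<exists>i. m = var_exp i"
proof -
  obtain i where "0 < Poly_Mapping.lookup m i" using assms mdeg_pos_imp by fastforce
  then have m: "m = var_exp i + (m - var_exp i)" by (rule var_exp_decomp)
  then have "m - var_exp i = 0"
    using assms mdeg_add[of "var_exp i" "m - var_exp i"] by (simp add: mdeg_var_exp mdeg_eq_0_iff)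
  then show ?thesis using m by auto
qed

lemma mdeg_mono:
  assumes "\<forall>i. Poly_Mapping.lookup a i \<le> Poly_Mapping.lookup b i"
  shows "mdeg a \<le> mdeg b" and "a \<noteq> b \<Longrightarrow> mdeg a < mdeg b"
proof -
  have b: "b = a + (b - a)" by (rule exp_decomp[OF assms])
  then show "mdeg a \<le> mdeg b" by (metis mdeg_add le_add1)
  assume "a \<noteq> b"
  then have "mdeg (b - a) \<noteq> 0" using b by (auto simp: mdeg_eq_0_iff)
  then show "mdeg a < mdeg b" using b by (metis mdeg_add less_add_same_cancel1 neq0_conv)
qed

lemma finite_mons_of_deg:
  "finite {m::nat \<Rightarrow>\<^sub>0 nat. Poly_Mapping.keys m \<subseteq> {..<n} \<and> mdeg m = d}"
proof -
  let ?M = "{m::nat \<Rightarrow>\<^sub>0 nat. Poly_Mapping.keys m \<subseteq> {..<n} \<and> mdeg m = d}"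
  let ?F = "{f::nat \<Rightarrow> nat. \<forall>x. (x \<in> {..<n} \<longrightarrow> f x \<in> {..d}) \<and> (x \<notin> {..<n} \<longrightarrow> f x = 0)}"
  have "Poly_Mapping.lookup m x \<le> mdeg m" for m :: "nat \<Rightarrow>\<^sub>0 nat" and x
    by (cases "x \<in> Poly_Mapping.keys m") (auto simp: mdeg_def in_keys_iff intro: member_le_sum)
  then have "Poly_Mapping.lookup ` ?M \<subseteq> ?F"
    by (force simp: in_keys_iff)
  moreover have "finite ?F" by (rule finite_set_of_finite_funs) auto
  ultimately have "finite (Poly_Mapping.lookup ` ?M)" by (rule finite_subset)
  then show ?thesis by (rule finite_imageD) (simp add: inj_on_def)
qed

lemma mon_in_polyR: "Poly_Mapping.keys m \<subseteq> {..<n} \<Longrightarrow> mon c m \<in> polyR n"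
  using keys_mon_subset[of c m] by (auto simp: polyR_def)

lemma polyR_add: "f \<in> polyR n \<Longrightarrow> g \<in> polyR n \<Longrightarrow> f + g \<in> polyR n"
  using keys_add[of f g] by (auto simp: polyR_def)

lemma polyR_mult: "f \<in> polyR n \<Longrightarrow> g \<in> polyR n \<Longrightarrow> f * g \<in> polyR n"
  using keys_mult[of f g] by (fastforce simp: polyR_def keys_add_exp)

lemma polyR_zero: "0 \<in> polyR n"
  by (simp add: polyR_def)

lemma polyR_sum: "(\<And>a. a \<in> A \<Longrightarrow> g a \<in> polyR n) \<Longrightarrow> sum g A \<in> polyR n"
  by (induction A rule: infinite_finite_induct) (auto simp: polyR_zero polyR_add)

lemma mon_in_homog: "Poly_Mapping.keys m \<subseteq> {..<n} \<Longrightarrow> mon c m \<in> homog n (mdeg m)"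
  using keys_mon_subset[of c m] by (auto simp: homog_def intro: mon_in_polyR)

lemma homog_zero: "0 \<in> homog n d"
  by (simp add: homog_def polyR_zero)

lemma homog_add: "f \<in> homog n d \<Longrightarrow> g \<in> homog n d \<Longrightarrow> f + g \<in> homog n d"
  using keys_add[of f g] by (auto simp: homog_def polyR_add)

lemma homog_sum: "(\<And>a. a \<in> A \<Longrightarrow> g a \<in> homog n d) \<Longrightarrow> sum g A \<in> homog n d"
  by (induction A rule: infinite_finite_induct) (simp_all add: homog_zero homog_add)

lemma homog_subset_polyR: "f \<in> homog n d \<Longrightarrow> f \<in> polyR n"
  by (simp add: homog_def)

context
  fixes n :: nat and I :: "'a::field mpoly set"
  assumes ideal: "is_ideal n I"
begin

lemma ideal_subset_polyR: "f \<in> I \<Longrightarrow> f \<in> polyR n"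
  using ideal by (auto simp: is_ideal_def)

lemma ideal_mult: "r \<in> polyR n \<Longrightarrow> f \<in> I \<Longrightarrow> r * f \<in> I"
  using ideal by (auto simp: is_ideal_def)

lemma ideal_sum: "(\<And>a. a \<in> A \<Longrightarrow> g a \<in> I) \<Longrightarrow> sum g A \<in> I"
  using ideal by (induction A rule: infinite_finite_induct) (auto simp: is_ideal_def)

lemma ideal_mon_scale: "mon 1 m \<in> I \<Longrightarrow> mon c m \<in> I"
  using ideal_mult[of "mon c 0" "mon 1 m"] by (simp add: mon_in_polyR mon_mult)

lemma ideal_mon_add:
  assumes "mon 1 a \<in> I" "Poly_Mapping.keys b \<subseteq> {..<n}"
  shows "mon 1 (a + b) \<in> I"
  using ideal_mult[OF mon_in_polyR[OF assms(2)] assms(1)] by (simp add: mon_mult add.commute)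

lemma ideal_of_mons:
  assumes "f \<in> polyR n" "\<forall>m\<in>Poly_Mapping.keys f. mon 1 m \<in> I"
  shows "f \<in> I"
  using ideal_sum[of "Poly_Mapping.keys f" "\<lambda>m. mon (Poly_Mapping.lookup f m) m"] assms
  by (simp add: ideal_mon_scale flip: poly_expand)

lemma keys_of_mon_in_ideal: "mon 1 m \<in> I \<Longrightarrow> Poly_Mapping.keys m \<subseteq> {..<n}"
  using ideal_subset_polyR[of "mon 1 m"] by (auto simp: polyR_def mon_def)

end

lemma ideal_gen_least: "is_ideal n J \<Longrightarrow> S \<subseteq> J \<Longrightarrow> ideal_gen n S \<subseteq> J"
  by (auto simp: ideal_gen_def)

lemma ideal_gen_superset: "S \<subseteq> ideal_gen n S"
  by (auto simp: ideal_gen_def)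

section \<open>Powers of the ideal (x_1,...,x_(n-1))\<close>

abbreviation low_vars_ideal :: "nat \<Rightarrow> 'a::field mpoly set" where
  "low_vars_ideal n \<equiv> ideal_gen n {mon 1 (var_exp i) | i. i < n - 1}"

definition low_var_multiples :: "nat \<Rightarrow> nat \<Rightarrow> 'a::field mpoly set" where
  "low_var_multiples n j = {f \<in> polyR n. \<forall>m\<in>Poly_Mapping.keys f.
     \<exists>w r. Poly_Mapping.keys w \<subseteq> {..<n - 1} \<and> mdeg w = j \<and> m = w + r}"

lemma low_var_multiples_0: "low_var_multiples n 0 = polyR n"
  by (auto simp: low_var_multiples_def mdeg_eq_0_iff)

lemma low_var_multiples_mult:
  assumes f: "f \<in> low_var_multiples n i" and g: "g \<in> low_var_multiples n j"
  shows "f * g \<in> low_var_multiples n (i + j)"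
proof -
  have "\<exists>w r. Poly_Mapping.keys w \<subseteq> {..<n - 1} \<and> mdeg w = i + j \<and> m = w + r"
    if m_key: "m \<in> Poly_Mapping.keys (f * g)" for m
  proof -
    obtain a b where m: "m = a + b" "a \<in> Poly_Mapping.keys f" "b \<in> Poly_Mapping.keys g"
      using keys_mult[of f g] m_key by blast
    obtain wa ra where "Poly_Mapping.keys wa \<subseteq> {..<n - 1}" "mdeg wa = i" "a = wa + ra"
      using f m(2) unfolding low_var_multiples_def by blast
    moreover obtain wb rb where "Poly_Mapping.keys wb \<subseteq> {..<n - 1}" "mdeg wb = j" "b = wb + rb"
      using g m(3) unfolding low_var_multiples_def by blast
    ultimately show ?thesis using m
      by (intro exI[of _ "wa + wb"] exI[of _ "ra + rb"]) (auto simp: keys_add_exp mdeg_add ac_simps)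
  qed
  then show ?thesis
    using f g by (auto simp: low_var_multiples_def intro: polyR_mult)
qed

lemma low_var_multiples_is_ideal: "is_ideal n (low_var_multiples n j :: 'a::field mpoly set)"
  unfolding is_ideal_def
proof (intro conjI ballI)
  show "f + g \<in> low_var_multiples n j"
    if "f \<in> low_var_multiples n j" "g \<in> low_var_multiples n j" for f g :: "'a mpoly"
    using that keys_add[of f g] by (auto simp: low_var_multiples_def polyR_add)
  show "r * f \<in> low_var_multiples n j"
    if "r \<in> polyR n" "f \<in> low_var_multiples n j" for r f :: "'a mpoly"
    using low_var_multiples_mult[of r n 0 f j] that by (simp add: low_var_multiples_0)
qed (auto simp: low_var_multiples_def polyR_zero)

lemma low_vars_ideal_subset_multiples:
  "low_vars_ideal n \<subseteq> (low_var_multiples n 1 :: 'a::field mpoly set)"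
proof (rule ideal_gen_least[OF low_var_multiples_is_ideal], safe)
  fix i assume i: "i < n - 1"
  have "var_exp i \<in> {w. Poly_Mapping.keys w \<subseteq> {..<n - 1} \<and> mdeg w = 1}"
    using i by (simp add: keys_var_exp mdeg_var_exp)
  moreover have "mon (1::'a) (var_exp i) \<in> polyR n"
    using i by (intro mon_in_polyR) (simp add: keys_var_exp)
  ultimately show "mon (1::'a) (var_exp i) \<in> low_var_multiples n 1"
    using keys_mon_subset[of "1::'a" "var_exp i"] by (force simp: low_var_multiples_def)
qed

lemma pow_low_vars_subset_multiples:
  "ideal_pow n (low_vars_ideal n :: 'a::field mpoly set) j \<subseteq> low_var_multiples n j"
proof (induction j)
  case 0
  show ?case by (simp add: low_var_multiples_0)
next
  case (Suc j)
  have "f * g \<in> low_var_multiples n (Suc j)"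
    if "f \<in> low_vars_ideal n" "g \<in> ideal_pow n (low_vars_ideal n) j" for f g :: "'a mpoly"
    using low_var_multiples_mult[of f n 1 g j] that low_vars_ideal_subset_multiples Suc.IH by auto
  then show ?case
    unfolding ideal_pow.simps by (intro ideal_gen_least[OF low_var_multiples_is_ideal]) blast
qed

lemma mon_in_pow_low_vars_ideal:
  assumes "Poly_Mapping.keys w \<subseteq> {..<n - 1}" "mdeg w = j"
  shows "mon (1::'a::field) w \<in> ideal_pow n (low_vars_ideal n) j"
  using assms
proof (induction j arbitrary: w)
  case 0
  then show ?case by (auto simp: mdeg_eq_0_iff intro: mon_in_polyR)
next
  case (Suc j)
  obtain i where i: "0 < Poly_Mapping.lookup w i"
    using mdeg_pos_imp[of w] Suc.prems(2) by auto
  define w' where "w' = w - var_exp i"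
  have w: "w = var_exp i + w'" unfolding w'_def using i by (rule var_exp_decomp)
  have "i \<in> Poly_Mapping.keys w" using i by (simp add: in_keys_iff)
  then have "i < n - 1" using Suc.prems by auto
  then have "mon (1::'a) (var_exp i) \<in> low_vars_ideal n"
    by (intro ideal_gen_superset[THEN subsetD]) blast
  moreover have "mon (1::'a) w' \<in> ideal_pow n (low_vars_ideal n) j"
  proof (rule Suc.IH)
    show "Poly_Mapping.keys w' \<subseteq> {..<n - 1}"
      using Suc.prems(1) keys_diff_exp[of w "var_exp i"] by (simp add: w'_def)
    show "mdeg w' = j" using Suc.prems(2) w by (simp add: mdeg_add mdeg_var_exp)
  qed
  ultimately have "mon (1::'a) (var_exp i) * mon 1 w' \<in> ideal_pow n (low_vars_ideal n) (Suc j)"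
    unfolding ideal_pow.simps by (intro ideal_gen_superset[THEN subsetD]) blast
  then show ?case using w by (simp add: mon_mult)
qed

lemma pow_low_vars_ideal_subset_iff:
  fixes I :: "'a::field mpoly set"
  assumes "is_ideal n I"
  shows "ideal_pow n (low_vars_ideal n) j \<subseteq> I \<longleftrightarrow>
    (\<forall>w. Poly_Mapping.keys w \<subseteq> {..<n - 1} \<longrightarrow> mdeg w = j \<longrightarrow> mon 1 w \<in> I)"
proof (intro iffI allI impI subsetI)
  fix w assume "ideal_pow n (low_vars_ideal n) j \<subseteq> I" "Poly_Mapping.keys w \<subseteq> {..<n - 1}"
    "mdeg w = j"
  then show "mon 1 w \<in> I" using mon_in_pow_low_vars_ideal[of w n j] by blast
next
  fix f :: "'a mpoly" assume low: "\<forall>w. Poly_Mapping.keys w \<subseteq> {..<n - 1} \<longrightarrow> mdeg w = j \<longrightarrow> mon 1 w \<in> I"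
    and "f \<in> ideal_pow n (low_vars_ideal n) j"
  then have f: "f \<in> low_var_multiples n j"
    using pow_low_vars_subset_multiples by blast
  have "mon 1 m \<in> I" if m: "m \<in> Poly_Mapping.keys f" for m
  proof -
    obtain w r where w: "Poly_Mapping.keys w \<subseteq> {..<n - 1}" "mdeg w = j" and wr: "m = w + r"
      using f m unfolding low_var_multiples_def by blast
    have "Poly_Mapping.keys m \<subseteq> {..<n}"
      using f m by (auto simp: low_var_multiples_def polyR_def)
    then have "Poly_Mapping.keys r \<subseteq> {..<n}" by (simp add: wr keys_add_exp)
    then show ?thesis
      using ideal_mon_add[OF assms low[rule_format, OF w]] wr by simp
  qed
  then show "f \<in> I"
    using f ideal_of_mons[OF assms] by (simp add: low_var_multiples_def)
qed

section \<open>Standard monomials and the Hilbert function\<close>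

definition std_mons :: "nat \<Rightarrow> 'a::field mpoly set \<Rightarrow> nat \<Rightarrow> (nat \<Rightarrow>\<^sub>0 nat) set" where
  "std_mons n I d = {m. Poly_Mapping.keys m \<subseteq> {..<n} \<and> mdeg m = d \<and> mon 1 m \<notin> I}"

lemma finite_std_mons: "finite (std_mons n I d)"
  by (rule finite_subset[OF _ finite_mons_of_deg[of n d]]) (auto simp: std_mons_def)

lemma mon_std_in_homog: "m \<in> std_mons n I d \<Longrightarrow> mon c m \<in> homog n d"
  using mon_in_homog[of m n c] by (auto simp: std_mons_def)

lemma (in vector_space) inj_on_independent_image:
  assumes fin: "finite S" and indep: "\<And>c. (\<Sum>x\<in>S. c x *s g x) = 0 \<Longrightarrow> \<forall>x\<in>S. c x = 0"
  shows "inj_on g S" and "independent (g ` S)"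
proof -
  show inj: "inj_on g S"
  proof (rule inj_onI, rule ccontr)
    fix x y assume xy: "x \<in> S" "y \<in> S" "g x = g y" "x \<noteq> y"
    define c :: "_ \<Rightarrow> 'a" where "c z = (if z = x then 1 else if z = y then -1 else 0)" for z
    have "(\<Sum>z\<in>S. c z *s g z) = (\<Sum>z\<in>S. (if z = x then g x else 0) + (if z = y then - g y else 0))"
      using xy(4) by (intro sum.cong) (auto simp: c_def)
    also have "\<dots> = 0" using xy fin by (simp add: sum.distrib)
    finally have "c x = 0" using indep xy(1) by blast
    then show False by (simp add: c_def)
  qed
  show "independent (g ` S)"
  proof (rule independent_if_scalars_zero)
    fix f v assume "(\<Sum>v\<in>g ` S. f v *s v) = 0" "v \<in> g ` S"
    then show "f v = 0" using indep[of "f \<circ> g"] by (auto simp: sum.reindex[OF inj])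
  qed (use fin in simp)
qed

definition scale_mpoly :: "'a::field \<Rightarrow> 'a mpoly \<Rightarrow> 'a mpoly" where
  "scale_mpoly c f = mon c 0 * f"

interpretation mpoly: vector_space "scale_mpoly :: 'a::field \<Rightarrow> 'a mpoly \<Rightarrow> 'a mpoly"
proof
  fix a b :: 'a and f g :: "'a mpoly"
  show "scale_mpoly a (f + g) = scale_mpoly a f + scale_mpoly a g"
    by (simp add: scale_mpoly_def distrib_left)
  show "scale_mpoly (a + b) f = scale_mpoly a f + scale_mpoly b f"
    by (simp add: scale_mpoly_def mon_def single_add distrib_right)
  show "scale_mpoly a (scale_mpoly b f) = scale_mpoly (a * b) f"
    by (simp add: scale_mpoly_def mon_mult flip: mult.assoc)
  show "scale_mpoly 1 f = f"
    by (simp add: scale_mpoly_def mon_def)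
qed

lemma scale_mon: "scale_mpoly c (mon 1 m) = mon c m"
  by (simp add: scale_mpoly_def mon_mult)

lemma independent_mons:
  assumes "finite A"
  shows "mpoly.independent ((\<lambda>m. mon (1::'a::field) m) ` A)"
proof (rule mpoly.inj_on_independent_image(2)[OF assms])
  fix c :: "_ \<Rightarrow> 'a" assume "(\<Sum>m\<in>A. scale_mpoly (c m) (mon 1 m)) = 0"
  then have "Poly_Mapping.lookup (\<Sum>m\<in>A. mon (c m) m) m = 0" for m
    by (simp add: scale_mon)
  then show "\<forall>m\<in>A. c m = 0" using assms by (metis lookup_sum_mon_id)
qed

definition std_part :: "'a::field mpoly set \<Rightarrow> 'a mpoly \<Rightarrow> 'a mpoly" where
  "std_part I f = (\<Sum>m\<in>{m\<in>Poly_Mapping.keys f. mon 1 m \<notin> I}. mon (Poly_Mapping.lookup f m) m)"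

lemma lookup_std_part:
  "Poly_Mapping.lookup (std_part I f) k = (if mon 1 k \<notin> I then Poly_Mapping.lookup f k else 0)"
  by (auto simp: std_part_def lookup_sum_mon_id in_keys_iff)

lemma std_part_diff: "std_part I (f - g) = std_part I f - std_part I g"
  by (rule poly_mapping_eqI) (simp add: lookup_std_part lookup_minus)

lemma std_part_scale: "std_part I (scale_mpoly c f) = scale_mpoly c (std_part I f)"
  by (rule poly_mapping_eqI) (simp add: lookup_std_part scale_mpoly_def lookup_scale)

lemma std_part_sum: "std_part I (sum g A) = (\<Sum>a\<in>A. std_part I (g a))"
  by (rule poly_mapping_eqI) (simp add: lookup_std_part lookup_sum)

lemma std_part_mon: "mon 1 m \<notin> I \<Longrightarrow> std_part I (mon 1 m) = mon 1 m"
  by (rule poly_mapping_eqI) (simp add: lookup_std_part lookup_mon)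

lemma std_part_in_span:
  assumes "f \<in> homog n d"
  shows "std_part I f \<in> mpoly.span ((\<lambda>m. mon 1 m) ` std_mons n I d)"
  unfolding std_part_def
proof (rule mpoly.span_sum)
  fix m assume "m \<in> {m \<in> Poly_Mapping.keys f. mon 1 m \<notin> I}"
  then have "m \<in> std_mons n I d" using assms by (auto simp: homog_def polyR_def std_mons_def)
  then show "mon (Poly_Mapping.lookup f m) m \<in> mpoly.span ((\<lambda>m. mon 1 m) ` std_mons n I d)"
    by (metis image_eqI mpoly.span_base mpoly.span_scale scale_mon)
qed

context
  fixes n :: nat and I :: "'a::field mpoly set"
  assumes mon_ideal: "monomial_ideal n I"
begin

lemma monomial_ideal_is_ideal: "is_ideal n I"
  using mon_ideal by (simp add: monomial_ideal_def)

lemma mon_in_ideal_of_key: "f \<in> I \<Longrightarrow> m \<in> Poly_Mapping.keys f \<Longrightarrow> mon 1 m \<in> I"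
  using mon_ideal by (auto simp: monomial_ideal_def)

lemma std_part_eq_0_iff: "f \<in> polyR n \<Longrightarrow> std_part I f = 0 \<longleftrightarrow> f \<in> I"
proof
  assume "f \<in> polyR n" "std_part I f = 0"
  then have "\<forall>m\<in>Poly_Mapping.keys f. mon 1 m \<in> I"
    by (metis in_keys_iff lookup_std_part lookup_zero)
  then show "f \<in> I" using ideal_of_mons[OF monomial_ideal_is_ideal] \<open>f \<in> polyR n\<close> by blast
next
  assume f: "f \<in> I"
  show "std_part I f = 0"
  proof (rule poly_mapping_eqI)
    fix k
    show "Poly_Mapping.lookup (std_part I f) k = Poly_Mapping.lookup 0 k"
      using mon_in_ideal_of_key[OF f, of k] by (auto simp: lookup_std_part in_keys_iff)
  qed
qed

lemma diff_std_part_in_ideal: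
  assumes "f \<in> polyR n"
  shows "f - std_part I f \<in> I"
proof (rule ideal_of_mons[OF monomial_ideal_is_ideal])
  have keys: "Poly_Mapping.keys (f - std_part I f) \<subseteq> {m \<in> Poly_Mapping.keys f. mon 1 m \<in> I}"
    by (auto simp: in_keys_iff lookup_minus lookup_std_part split: if_splits)
  then show "f - std_part I f \<in> polyR n" using assms by (auto simp: polyR_def)
  show "\<forall>m\<in>Poly_Mapping.keys (f - std_part I f). mon 1 m \<in> I" using keys by auto
qed

lemma std_part_mult_std_part:
  assumes "l \<in> polyR n" "f \<in> polyR n"
  shows "std_part I (l * std_part I f) = std_part I (l * f)"
proof -
  have "l * f - l * std_part I f \<in> I"
    using ideal_mult[OF monomial_ideal_is_ideal assms(1) diff_std_part_in_ideal[OF assms(2)]]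
    by (simp add: right_diff_distrib)
  then have "std_part I (l * f - l * std_part I f) = 0"
    using std_part_eq_0_iff ideal_subset_polyR[OF monomial_ideal_is_ideal] by blast
  then show ?thesis by (simp add: std_part_diff)
qed

lemma std_part_mult_in_span:
  assumes l: "l \<in> polyR n" and f: "f \<in> homog n d"
  shows "std_part I (l * f) \<in> mpoly.span ((\<lambda>u. std_part I (l * mon 1 u)) ` std_mons n I d)"
proof -
  let ?K = "{u \<in> Poly_Mapping.keys f. mon 1 u \<notin> I}"
  have "l * std_part I f = (\<Sum>u\<in>?K. l * scale_mpoly (Poly_Mapping.lookup f u) (mon 1 u))"
    by (simp add: std_part_def scale_mon sum_distrib_left)
  also have "\<dots> = (\<Sum>u\<in>?K. scale_mpoly (Poly_Mapping.lookup f u) (l * mon 1 u))"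
    by (simp add: scale_mpoly_def mult.left_commute)
  finally have "std_part I (l * f)
      = (\<Sum>u\<in>?K. scale_mpoly (Poly_Mapping.lookup f u) (std_part I (l * mon 1 u)))"
    using std_part_mult_std_part[OF l homog_subset_polyR[OF f]]
    by (simp add: std_part_sum std_part_scale)
  also have "\<dots> \<in> mpoly.span ((\<lambda>u. std_part I (l * mon 1 u)) ` std_mons n I d)"
  proof (rule mpoly.span_sum)
    fix u assume "u \<in> ?K"
    then have "u \<in> std_mons n I d" using f by (auto simp: homog_def polyR_def std_mons_def)
    then show "scale_mpoly (Poly_Mapping.lookup f u) (std_part I (l * mon 1 u))
        \<in> mpoly.span ((\<lambda>u. std_part I (l * mon 1 u)) ` std_mons n I d)"
      by (intro mpoly.span_scale mpoly.span_base imageI)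
  qed
  finally show ?thesis .
qed

lemma indep_mod_std_mons: "indep_mod I ((\<lambda>m. mon 1 m) ` std_mons n I d)"
  unfolding indep_mod_def
proof (intro allI impI ballI)
  fix c :: "'a mpoly \<Rightarrow> 'a" and v :: "'a mpoly"
  assume s: "(\<Sum>f\<in>(\<lambda>m. mon 1 m) ` std_mons n I d. mon (c f) 0 * f) \<in> I"
    and "v \<in> (\<lambda>m. mon 1 m) ` std_mons n I d"
  then obtain m where m: "m \<in> std_mons n I d" "v = mon 1 m" by blast
  have inj: "inj_on (\<lambda>m. mon (1::'a) m) (std_mons n I d)"
    by (auto simp: inj_on_def mon_one_eq_iff)
  have "(\<Sum>f\<in>(\<lambda>m. mon 1 m) ` std_mons n I d. mon (c f) 0 * f)
          = (\<Sum>m\<in>std_mons n I d. mon (c (mon 1 m)) m)"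
    by (simp add: sum.reindex[OF inj] mon_mult)
  then have "Poly_Mapping.lookup (\<Sum>f\<in>(\<lambda>m. mon 1 m) ` std_mons n I d. mon (c f) 0 * f) m = c v"
    using m by (simp add: lookup_sum_mon_id[OF finite_std_mons])
  then show "c v = 0"
    using mon_in_ideal_of_key[OF s, of m] m(1) by (auto simp: in_keys_iff std_mons_def)
qed

lemma card_le_card_std_mons:
  assumes S: "finite S" "S \<subseteq> homog n d" and indep: "indep_mod I S"
  shows "card S \<le> card (std_mons n I d)"
proof -
  have "\<forall>f\<in>S. c f = 0" if "(\<Sum>f\<in>S. scale_mpoly (c f) (std_part I f)) = 0" for c
  proof -
    have "(\<Sum>f\<in>S. scale_mpoly (c f) f) \<in> polyR n"
      using S by (auto simp: homog_def scale_mpoly_def intro!: polyR_sum polyR_mult mon_in_polyR)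
    moreover have "std_part I (\<Sum>f\<in>S. scale_mpoly (c f) f) = 0"
      using that by (simp add: std_part_sum std_part_scale)
    ultimately have "(\<Sum>f\<in>S. mon (c f) 0 * f) \<in> I"
      using std_part_eq_0_iff by (simp add: scale_mpoly_def)
    then show ?thesis using indep by (simp add: indep_mod_def)
  qed
  note image = mpoly.inj_on_independent_image[OF S(1), of "std_part I", OF this]
  have "std_part I ` S \<subseteq> mpoly.span ((\<lambda>m. mon 1 m) ` std_mons n I d)"
    using S(2) std_part_in_span by blast
  then have "card (std_part I ` S) \<le> card ((\<lambda>m. mon (1::'a) m) ` std_mons n I d)"
    using mpoly.independent_span_bound[OF finite_imageI[OF finite_std_mons] image(2)] by blast
  also have "\<dots> \<le> card (std_mons n I d)" by (rule card_image_le[OF finite_std_mons])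
  finally show ?thesis using card_image[OF image(1)] by simp
qed

lemma hilb_eq_card_std_mons: "hilb n I d = card (std_mons n I d)"
  unfolding hilb_def
proof (rule Greatest_equality)
  let ?S = "(\<lambda>m. mon (1::'a) m) ` std_mons n I d"
  have "card ?S = card (std_mons n I d)"
    by (rule card_image) (auto simp: inj_on_def mon_one_eq_iff)
  then show "\<exists>S. finite S \<and> S \<subseteq> homog n d \<and> card S = card (std_mons n I d) \<and> indep_mod I S"
    using indep_mod_std_mons finite_std_mons mon_std_in_homog by (intro exI[of _ ?S]) blast
qed (use card_le_card_std_mons in blast)

end

section \<open>Multiplication by the last variable\<close>

abbreviation last_var_exp :: "nat \<Rightarrow> nat \<Rightarrow>\<^sub>0 nat" where
  "last_var_exp n \<equiv> var_exp (n - 1)"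

text \<open>Injectivity and surjectivity of multiplication by x_n from (R/I)_d to (R/I)_(d+1),
  read off on standard monomials.\<close>

definition xn_inj :: "nat \<Rightarrow> 'a::field mpoly set \<Rightarrow> nat \<Rightarrow> bool" where
  "xn_inj n I d \<longleftrightarrow> (\<forall>u\<in>std_mons n I d. mon 1 (last_var_exp n + u) \<notin> I)"

definition xn_surj :: "nat \<Rightarrow> 'a::field mpoly set \<Rightarrow> nat \<Rightarrow> bool" where
  "xn_surj n I d \<longleftrightarrow> (\<forall>w\<in>std_mons n I (Suc d). 0 < Poly_Mapping.lookup w (n - 1))"

lemma xn_surj_iff_low_mons:
  fixes I :: "'a::field mpoly set"
  shows "xn_surj n I d \<longleftrightarrow>
    (\<forall>w. Poly_Mapping.keys w \<subseteq> {..<n - 1} \<longrightarrow> mdeg w = Suc d \<longrightarrow> mon 1 w \<in> I)"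
  unfolding xn_surj_def std_mons_def
proof (intro iffI allI impI ballI)
  fix w assume surj: "\<forall>w\<in>{m. Poly_Mapping.keys m \<subseteq> {..<n} \<and> mdeg m = Suc d \<and> mon 1 m \<notin> I}.
      0 < Poly_Mapping.lookup w (n - 1)"
    and w: "Poly_Mapping.keys w \<subseteq> {..<n - 1}" "mdeg w = Suc d"
  show "mon 1 w \<in> I"
  proof (rule ccontr)
    assume "mon 1 w \<notin> I"
    moreover have "Poly_Mapping.keys w \<subseteq> {..<n}" using w(1) by auto
    ultimately have "n - 1 \<in> Poly_Mapping.keys w" using surj w(2) by (simp add: in_keys_iff)
    then show False using w(1) by auto
  qed
next
  fix w assume low: "\<forall>w. Poly_Mapping.keys w \<subseteq> {..<n - 1} \<longrightarrow> mdeg w = Suc d \<longrightarrow> mon 1 w \<in> I"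
    and w: "w \<in> {m. Poly_Mapping.keys m \<subseteq> {..<n} \<and> mdeg m = Suc d \<and> mon 1 m \<notin> I}"
  show "0 < Poly_Mapping.lookup w (n - 1)"
  proof (rule ccontr)
    assume "\<not> 0 < Poly_Mapping.lookup w (n - 1)"
    then have not_key: "n - 1 \<notin> Poly_Mapping.keys w" by (simp add: in_keys_iff)
    have "Poly_Mapping.keys w \<subseteq> {..<n - 1}"
    proof
      fix x assume "x \<in> Poly_Mapping.keys w"
      then have "x < n" "x \<noteq> n - 1" using w not_key by auto
      then show "x \<in> {..<n - 1}" by simp
    qed
    then show False using low w by auto
  qed
qed

lemma exists_xn_surj:
  assumes "artinian_quot n I"
  shows "\<exists>d. xn_surj n I d"
proof -
  obtain D where D: "\<forall>d\<ge>D. homog n d \<subseteq> I"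
    using assms by (auto simp: artinian_quot_def)
  have "homog n (Suc D) \<subseteq> I" using D by simp
  then have "w \<notin> std_mons n I (Suc D)" for w
    using mon_in_homog[of w n 1] by (auto simp: std_mons_def)
  then have "std_mons n I (Suc D) = {}" by blast
  then show ?thesis by (auto simp: xn_surj_def)
qed

lemma min_mon_gen_exists:
  assumes "mon 1 m \<in> I"
  shows "\<exists>M. min_mon_gen n I M \<and> (\<forall>i. Poly_Mapping.lookup M i \<le> Poly_Mapping.lookup m i)"
  using assms
proof (induction "mdeg m" arbitrary: m rule: less_induct)
  case less
  show ?case
  proof (cases "min_mon_gen n I m")
    case False
    then obtain m' where m': "mon 1 m' \<in> I" "\<forall>i. Poly_Mapping.lookup m' i \<le> Poly_Mapping.lookup m i"
      "m' \<noteq> m"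
      using less.prems by (auto simp: min_mon_gen_def)
    then have "mdeg m' < mdeg m" using mdeg_mono(2) by blast
    then show ?thesis using less.hyps m' by (meson le_trans)
  qed auto
qed

lemma keys_last_var_exp: "1 \<le> n \<Longrightarrow> Poly_Mapping.keys (last_var_exp n) \<subseteq> {..<n}"
  by (simp add: keys_var_exp)

lemma last_var_exp_add_std_mons:
  "1 \<le> n \<Longrightarrow> u \<in> std_mons n I d \<Longrightarrow> mon 1 (last_var_exp n + u) \<notin> I
     \<Longrightarrow> last_var_exp n + u \<in> std_mons n I (Suc d)"
  using keys_last_var_exp by (auto simp: std_mons_def keys_add_exp mdeg_add mdeg_var_exp)

lemma divide_by_last_var:
  assumes g: "g \<in> homog n (Suc d)"
  shows "\<exists>f\<in>homog n d. \<forall>m\<in>Poly_Mapping.keys (g - mon 1 (last_var_exp n) * f).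
    m \<in> Poly_Mapping.keys g \<and> Poly_Mapping.lookup m (n - 1) = 0"
proof
  define A where "A = {m \<in> Poly_Mapping.keys g. 0 < Poly_Mapping.lookup m (n - 1)}"
  define f where "f = (\<Sum>m\<in>A. mon (Poly_Mapping.lookup g m) (m - last_var_exp n))"
  have fin: "finite A" by (simp add: A_def)
  have g_keys: "Poly_Mapping.keys m \<subseteq> {..<n}" "mdeg m = Suc d" if "m \<in> Poly_Mapping.keys g" for m
    using g that by (auto simp: homog_def polyR_def)
  have dec: "m = last_var_exp n + (m - last_var_exp n)" if "m \<in> A" for m
    by (rule var_exp_decomp) (use that in \<open>simp add: A_def\<close>)
  have "mon 1 (last_var_exp n) * f
          = (\<Sum>m\<in>A. mon (Poly_Mapping.lookup g m) (last_var_exp n + (m - last_var_exp n)))"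
    by (simp add: f_def sum_distrib_left mon_mult)
  also have "\<dots> = (\<Sum>m\<in>A. mon (Poly_Mapping.lookup g m) m)"
  proof (rule sum.cong[OF refl])
    fix m assume "m \<in> A"
    show "mon (Poly_Mapping.lookup g m) (last_var_exp n + (m - last_var_exp n))
        = mon (Poly_Mapping.lookup g m) m"
      by (simp only: dec[OF \<open>m \<in> A\<close>, symmetric])
  qed
  finally have xn_f: "mon 1 (last_var_exp n) * f = (\<Sum>m\<in>A. mon (Poly_Mapping.lookup g m) m)" .
  have "Poly_Mapping.lookup (g - mon 1 (last_var_exp n) * f) m
      = (if m \<in> A then 0 else Poly_Mapping.lookup g m)" for m
    unfolding xn_f by (simp add: lookup_minus lookup_sum_mon_id[OF fin])
  then have keys: "m \<in> Poly_Mapping.keys g" "Poly_Mapping.lookup m (n - 1) = 0"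
    if "m \<in> Poly_Mapping.keys (g - mon 1 (last_var_exp n) * f)" for m
    using that by (auto simp: in_keys_iff A_def split: if_splits)
  then show "\<forall>m\<in>Poly_Mapping.keys (g - mon 1 (last_var_exp n) * f).
      m \<in> Poly_Mapping.keys g \<and> Poly_Mapping.lookup m (n - 1) = 0"
    by blast
  have "mon (Poly_Mapping.lookup g m) (m - last_var_exp n) \<in> homog n d" if m: "m \<in> A" for m
  proof -
    have "mdeg (last_var_exp n + (m - last_var_exp n)) = Suc d"
      by (subst dec[OF m, symmetric]) (use m g_keys(2) in \<open>simp add: A_def\<close>)
    then have "mdeg (m - last_var_exp n) = d" by (simp add: mdeg_add mdeg_var_exp)
    then show ?thesis
      using mon_in_homog[of "m - last_var_exp n" n] m g_keys(1)[of m]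
        keys_diff_exp[of m "last_var_exp n"] by (auto simp: A_def)
  qed
  then show "f \<in> homog n d" unfolding f_def by (rule homog_sum)
qed

lemma card_shiftable_std_mons_less:
  assumes n: "1 \<le> n" and not_surj: "\<not> xn_surj n I d"
  shows "card {u \<in> std_mons n I d. mon 1 (last_var_exp n + u) \<notin> I} < card (std_mons n I (Suc d))"
    (is "card ?V < _")
proof -
  obtain w where w: "w \<in> std_mons n I (Suc d)" "Poly_Mapping.lookup w (n - 1) = 0"
    using not_surj by (auto simp: xn_surj_def)
  have "last_var_exp n + u \<in> std_mons n I (Suc d) - {w}" if u: "u \<in> ?V" for u
  proof -
    have "last_var_exp n + u \<in> std_mons n I (Suc d)"
      using last_var_exp_add_std_mons[OF n] u by blast
    moreover have "last_var_exp n + u \<noteq> w"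
      using w(2) lookup_var_exp_add_pos[of "n - 1" u] by auto
    ultimately show ?thesis by simp
  qed
  then have shift: "(+) (last_var_exp n) ` ?V \<subseteq> std_mons n I (Suc d) - {w}" by blast
  have inj: "inj_on ((+) (last_var_exp n)) ?V"
    by (auto simp: inj_on_def)
  have "card ?V \<le> card (std_mons n I (Suc d) - {w})"
    by (rule card_inj_on_le[OF inj shift finite_Diff[OF finite_std_mons]])
  also have "\<dots> < card (std_mons n I (Suc d))"
    using w(1) by (rule card_Diff1_less[OF finite_std_mons])
  finally show ?thesis .
qed

context
  fixes n :: nat and I :: "'a::field mpoly set"
  assumes n: "1 \<le> n" and mon_ideal: "monomial_ideal n I"
begin

private lemmas ideal = monomial_ideal_is_ideal[OF mon_ideal]

lemma card_std_mons_less: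
  assumes inj: "xn_inj n I d" and not_surj: "\<not> xn_surj n I d"
  shows "card (std_mons n I d) < card (std_mons n I (Suc d))"
proof -
  have "{u \<in> std_mons n I d. mon 1 (last_var_exp n + u) \<notin> I} = std_mons n I d"
    using inj by (auto simp: xn_inj_def)
  then show ?thesis using card_shiftable_std_mons_less[OF n not_surj] by simp
qed

lemma card_std_mons_Suc_le:
  assumes surj: "xn_surj n I d"
  shows "card (std_mons n I (Suc d)) \<le> card (std_mons n I d)"
proof -
  have w: "w = last_var_exp n + (w - last_var_exp n)" if "w \<in> std_mons n I (Suc d)" for w
    by (rule var_exp_decomp) (use surj that in \<open>auto simp: xn_surj_def\<close>)
  have "w - last_var_exp n \<in> std_mons n I d" if w_std: "w \<in> std_mons n I (Suc d)" for w
  proof -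
    let ?u = "w - last_var_exp n"
    have "mon 1 ?u \<notin> I"
    proof
      assume "mon 1 ?u \<in> I"
      then have "mon 1 (?u + last_var_exp n) \<in> I"
        by (rule ideal_mon_add[OF ideal _ keys_last_var_exp[OF n]])
      then have "mon 1 w \<in> I" by (metis add.commute w[OF w_std])
      then show False using w_std by (simp add: std_mons_def)
    qed
    moreover have "mdeg (last_var_exp n + ?u) = Suc d"
      by (subst w[OF w_std, symmetric]) (use w_std in \<open>simp add: std_mons_def\<close>)
    ultimately show ?thesis
      using w_std keys_diff_exp[of w "last_var_exp n"]
      by (auto simp: std_mons_def mdeg_add mdeg_var_exp)
  qed
  moreover have "inj_on (\<lambda>w. w - last_var_exp n) (std_mons n I (Suc d))"
    by (rule inj_onI) (metis w)
  ultimately show ?thesis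
    by (intro card_inj_on_le[OF _ _ finite_std_mons]) auto
qed

lemma xn_surj_Suc:
  assumes "xn_surj n I d"
  shows "xn_surj n I (Suc d)"
  unfolding xn_surj_iff_low_mons
proof (intro allI impI)
  fix w assume w: "Poly_Mapping.keys w \<subseteq> {..<n - 1}" "mdeg w = Suc (Suc d)"
  obtain i where i: "0 < Poly_Mapping.lookup w i" using mdeg_pos_imp[of w] w(2) by auto
  define w' where "w' = w - var_exp i"
  have w_eq: "w = var_exp i + w'" unfolding w'_def using i by (rule var_exp_decomp)
  have "i \<in> Poly_Mapping.keys w" using i by (simp add: in_keys_iff)
  then have "i < n" using w(1) by auto
  have low: "\<forall>w. Poly_Mapping.keys w \<subseteq> {..<n - 1} \<longrightarrow> mdeg w = Suc d \<longrightarrow> mon 1 w \<in> I"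
    using assms xn_surj_iff_low_mons by blast
  have "mon 1 w' \<in> I"
  proof (rule low[rule_format])
    show "Poly_Mapping.keys w' \<subseteq> {..<n - 1}"
      using w(1) keys_diff_exp[of w "var_exp i"] by (simp add: w'_def)
    show "mdeg w' = Suc d" using w(2) by (simp add: w_eq mdeg_add mdeg_var_exp)
  qed
  then have "mon 1 (w' + var_exp i) \<in> I"
    by (rule ideal_mon_add[OF ideal]) (simp add: keys_var_exp \<open>i < n\<close>)
  then show "mon 1 w \<in> I" by (simp add: w_eq add.commute)
qed

lemma xn_surj_mono: "d \<le> d' \<Longrightarrow> xn_surj n I d \<Longrightarrow> xn_surj n I d'"
  by (induction d' rule: dec_induct) (auto intro: xn_surj_Suc)

lemma mult_xn_injective:
  assumes inj: "xn_inj n I d" and f: "f \<in> homog n d" and xn_f: "mon 1 (last_var_exp n) * f \<in> I"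
  shows "f \<in> I"
proof (rule ideal_of_mons[OF ideal])
  show "f \<in> polyR n" using f by (simp add: homog_def)
  show "\<forall>m\<in>Poly_Mapping.keys f. mon 1 m \<in> I"
  proof (rule ballI, rule ccontr)
    fix m assume m: "m \<in> Poly_Mapping.keys f" "mon 1 m \<notin> I"
    then have "m \<in> std_mons n I d" using f by (auto simp: homog_def polyR_def std_mons_def)
    moreover have "last_var_exp n + m \<in> Poly_Mapping.keys (mon 1 (last_var_exp n) * f)"
      using m(1) by (simp add: in_keys_iff lookup_mon_times)
    then have "mon 1 (last_var_exp n + m) \<in> I"
      using mon_in_ideal_of_key[OF mon_ideal xn_f] by blast
    ultimately show False using inj by (auto simp: xn_inj_def)
  qed
qed

lemma mult_xn_surjective:
  assumes surj: "xn_surj n I d" and g: "g \<in> homog n (Suc d)"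
  shows "\<exists>f\<in>homog n d. g - mon 1 (last_var_exp n) * f \<in> I"
proof -
  obtain f where f: "f \<in> homog n d" and rem: "\<forall>m\<in>Poly_Mapping.keys (g - mon 1 (last_var_exp n) * f).
      m \<in> Poly_Mapping.keys g \<and> Poly_Mapping.lookup m (n - 1) = 0"
    using divide_by_last_var[OF g] by blast
  have "g - mon 1 (last_var_exp n) * f \<in> I"
  proof (rule ideal_of_mons[OF ideal])
    show "g - mon 1 (last_var_exp n) * f \<in> polyR n"
      using rem g by (auto simp: homog_def polyR_def)
    show "\<forall>m\<in>Poly_Mapping.keys (g - mon 1 (last_var_exp n) * f). mon 1 m \<in> I"
    proof (rule ballI, rule ccontr)
      fix m assume m: "m \<in> Poly_Mapping.keys (g - mon 1 (last_var_exp n) * f)" "mon 1 m \<notin> I"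
      then have "m \<in> std_mons n I (Suc d)"
        using rem g by (auto simp: homog_def polyR_def std_mons_def)
      then show False using surj rem m(1) by (auto simp: xn_surj_def)
    qed
  qed
  then show ?thesis using f by blast
qed

lemma xn_inj_of_min_gen_deg:
  assumes gens: "\<forall>m. min_mon_gen n I m \<and> 0 < Poly_Mapping.lookup m (n - 1) \<longrightarrow> k + 1 \<le> mdeg m"
    and "d < k"
  shows "xn_inj n I d"
  unfolding xn_inj_def
proof (intro ballI notI)
  fix u assume u: "u \<in> std_mons n I d" and xn_u: "mon 1 (last_var_exp n + u) \<in> I"
  obtain M where M: "min_mon_gen n I M"
    and M_dvd: "\<forall>i. Poly_Mapping.lookup M i \<le> Poly_Mapping.lookup (last_var_exp n + u) i"
    using min_mon_gen_exists[OF xn_u] by blast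
  show False
  proof (cases "\<forall>i. Poly_Mapping.lookup M i \<le> Poly_Mapping.lookup u i")
    case True
    have "mon 1 (M + (u - M)) \<in> I"
      using ideal_mon_add[OF ideal, of M "u - M"] M u keys_diff_exp[of u M]
      by (auto simp: min_mon_gen_def std_mons_def)
    then have "mon 1 u \<in> I" by (simp only: exp_decomp[OF True, symmetric])
    then show False using u by (simp add: std_mons_def)
  next
    case False
    then obtain i where i: "Poly_Mapping.lookup u i < Poly_Mapping.lookup M i"
      by (auto simp: not_le)
    have "i = n - 1"
      using M_dvd[rule_format, of i] i
      by (auto simp: lookup_add var_exp_def lookup_single when_def split: if_splits)
    then have "0 < Poly_Mapping.lookup M (n - 1)" using i by simp
    then have "k + 1 \<le> mdeg M" using gens M by blast
    moreover have "mdeg M \<le> mdeg (last_var_exp n + u)" by (rule mdeg_mono(1)[OF M_dvd])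
    ultimately show False
      using u \<open>d < k\<close> by (simp add: std_mons_def mdeg_add mdeg_var_exp)
  qed
qed

lemma min_gen_deg_of_xn_inj:
  assumes inj: "\<forall>d<k. xn_inj n I d"
    and M: "min_mon_gen n I M" "0 < Poly_Mapping.lookup M (n - 1)"
  shows "k + 1 \<le> mdeg M"
proof (rule ccontr)
  assume small: "\<not> k + 1 \<le> mdeg M"
  define u where "u = M - last_var_exp n"
  have M_eq: "M = last_var_exp n + u" unfolding u_def using M(2) by (rule var_exp_decomp)
  have M_in: "mon 1 M \<in> I" using M(1) by (simp add: min_mon_gen_def)
  have "mon 1 u \<notin> I"
  proof
    assume "mon 1 u \<in> I"
    moreover have "\<forall>i. Poly_Mapping.lookup u i \<le> Poly_Mapping.lookup M i"
      by (simp add: u_def lookup_minus)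
    ultimately have "u = M" using M(1) by (auto simp: min_mon_gen_def)
    have "mdeg M = mdeg (last_var_exp n + u)" using M_eq by (rule arg_cong)
    also have "\<dots> = 1 + mdeg u" by (simp add: mdeg_add mdeg_var_exp)
    finally show False using \<open>u = M\<close> by simp
  qed
  moreover have "Poly_Mapping.keys u \<subseteq> {..<n}"
    using keys_of_mon_in_ideal[OF ideal M_in] keys_diff_exp[of M "last_var_exp n"] u_def by blast
  ultimately have "u \<in> std_mons n I (mdeg u)" by (simp add: std_mons_def)
  moreover have "mdeg u < k"
    using small M_eq by (simp add: mdeg_add mdeg_var_exp)
  ultimately show False using inj M_in M_eq by (auto simp: xn_inj_def)
qed

lemma xn_inj_or_surj_iff_unimodal:
  assumes "artinian_quot n I"
  shows "(\<forall>d. xn_inj n I d \<or> xn_surj n I d) \<longleftrightarrow>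
    (\<exists>k. (\<forall>i<k. hilb n I i < hilb n I (i + 1)) \<and> (\<forall>i\<ge>k. hilb n I i \<ge> hilb n I (i + 1))
       \<and> xn_surj n I k \<and> (\<forall>d<k. xn_inj n I d))"
proof
  assume inj_or_surj: "\<forall>d. xn_inj n I d \<or> xn_surj n I d"
  define k where "k = (LEAST d. xn_surj n I d)"
  have surj_k: "xn_surj n I k"
    unfolding k_def using exists_xn_surj[OF assms] by (rule LeastI_ex)
  have not_surj: "\<not> xn_surj n I d" if "d < k" for d
    using not_less_Least[of d "xn_surj n I"] that unfolding k_def by blast
  then have inj_below: "xn_inj n I d" if "d < k" for d
    using inj_or_surj that by blast
  have "hilb n I i < hilb n I (i + 1)" if "i < k" for i
    using card_std_mons_less[OF inj_below not_surj] that
    by (simp add: hilb_eq_card_std_mons[OF mon_ideal])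
  moreover have "hilb n I i \<ge> hilb n I (i + 1)" if "k \<le> i" for i
    using card_std_mons_Suc_le[OF xn_surj_mono[OF that surj_k]]
    by (simp add: hilb_eq_card_std_mons[OF mon_ideal])
  ultimately show "\<exists>k. (\<forall>i<k. hilb n I i < hilb n I (i + 1))
      \<and> (\<forall>i\<ge>k. hilb n I i \<ge> hilb n I (i + 1)) \<and> xn_surj n I k \<and> (\<forall>d<k. xn_inj n I d)"
    using surj_k inj_below by blast
next
  assume "\<exists>k. (\<forall>i<k. hilb n I i < hilb n I (i + 1))
      \<and> (\<forall>i\<ge>k. hilb n I i \<ge> hilb n I (i + 1)) \<and> xn_surj n I k \<and> (\<forall>d<k. xn_inj n I d)"
  then obtain k where "xn_surj n I k" "\<forall>d<k. xn_inj n I d" by blast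
  then show "\<forall>d. xn_inj n I d \<or> xn_surj n I d"
    using xn_surj_mono by (metis not_le)
qed

end

section \<open>Strongly stable ideals\<close>

lemma strongly_stable_imp_monomial_ideal: "strongly_stable n I \<Longrightarrow> monomial_ideal n I"
  by (simp add: strongly_stable_def)

lemma strongly_stable_exchange_last:
  assumes "strongly_stable n I" "mon 1 (last_var_exp n + u) \<in> I" "i < n"
  shows "mon 1 (var_exp i + u) \<in> I"
proof (cases "i = n - 1")
  case False
  then have "i < n - 1" using assms(3) by simp
  then have "mon 1 (var_exp i + ((last_var_exp n + u) - last_var_exp n)) \<in> I"
    using assms(1,2) lookup_var_exp_add_pos unfolding strongly_stable_def by blast
  then show ?thesis by (simp add: add_diff_cancel_left_exp)
qed (use assms in simp)

context
  fixes n :: nat and I :: "'a::field mpoly set"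
  assumes n: "1 \<le> n" and ss: "strongly_stable n I"
begin

private lemmas mon_ideal = strongly_stable_imp_monomial_ideal[OF ss]
private lemmas ss_ideal = monomial_ideal_is_ideal[OF mon_ideal]

lemma linear_times_mem_of_xn_times_mem:
  assumes l: "l \<in> homog n 1" and u: "Poly_Mapping.keys u \<subseteq> {..<n}"
    and xn_u: "mon 1 (last_var_exp n + u) \<in> I"
  shows "l * mon 1 u \<in> I"
proof (rule ideal_of_mons[OF ss_ideal])
  show "l * mon 1 u \<in> polyR n"
    using l u by (auto simp: homog_def intro!: polyR_mult mon_in_polyR)
  show "\<forall>m\<in>Poly_Mapping.keys (l * mon 1 u). mon 1 m \<in> I"
  proof
    fix m assume "m \<in> Poly_Mapping.keys (l * mon 1 u)"
    then obtain a where a: "m = a + u" "a \<in> Poly_Mapping.keys l"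
      using keys_mult[of l "mon 1 u"] keys_mon_subset[of "1::'a" u] by blast
    then obtain i where i: "a = var_exp i" using l mdeg_eq_1_imp by (auto simp: homog_def)
    then have "i < n" using a(2) l by (auto simp: homog_def polyR_def keys_var_exp)
    then show "mon 1 m \<in> I" using strongly_stable_exchange_last[OF ss xn_u] a i by simp
  qed
qed

lemma xn_inj_of_mult_inj:
  assumes l: "l \<in> homog n 1" and inj: "\<forall>f\<in>homog n d. l * f \<in> I \<longrightarrow> f \<in> I"
  shows "xn_inj n I d"
  unfolding xn_inj_def
proof (intro ballI notI)
  fix u assume u: "u \<in> std_mons n I d" "mon 1 (last_var_exp n + u) \<in> I"
  then have "l * mon 1 u \<in> I"
    using linear_times_mem_of_xn_times_mem[OF l] by (simp add: std_mons_def)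
  then have "mon 1 u \<in> I" using inj mon_std_in_homog[OF u(1)] by blast
  then show False using u(1) by (simp add: std_mons_def)
qed

lemma card_std_mons_Suc_le_of_mult_surj:
  assumes l: "l \<in> homog n 1" and surj: "\<forall>g\<in>homog n (Suc d). \<exists>f\<in>homog n d. g - l * f \<in> I"
  shows "card (std_mons n I (Suc d)) \<le> card {u \<in> std_mons n I d. mon 1 (last_var_exp n + u) \<notin> I}"
    (is "_ \<le> card ?V")
proof -
  \<comment> \<open>(R/I)_(d+1) is spanned by the classes of l u, u standard of degree d, and those with
    x_n u \<in> I vanish.\<close>
  let ?B = "(\<lambda>u. std_part I (l * mon 1 u)) ` ?V"
  have l_poly: "l \<in> polyR n" using l by (rule homog_subset_polyR)
  have "std_part I (l * mon 1 u) \<in> mpoly.span ?B" if u: "u \<in> std_mons n I d" for u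
  proof (cases "mon 1 (last_var_exp n + u) \<in> I")
    case True
    then have "l * mon 1 u \<in> I"
      using linear_times_mem_of_xn_times_mem[OF l] u by (simp add: std_mons_def)
    then have "std_part I (l * mon 1 u) = 0"
      using std_part_eq_0_iff[OF mon_ideal] ideal_subset_polyR[OF ss_ideal] by blast
    then show ?thesis by (simp add: mpoly.span_zero)
  qed (use u in \<open>auto intro: mpoly.span_base\<close>)
  then have span_B: "mpoly.span ((\<lambda>u. std_part I (l * mon 1 u)) ` std_mons n I d) \<subseteq> mpoly.span ?B"
    by (intro mpoly.span_minimal mpoly.subspace_span) blast
  have "mon 1 t \<in> mpoly.span ?B" if t: "t \<in> std_mons n I (Suc d)" for t
  proof -
    obtain f where f: "f \<in> homog n d" "mon 1 t - l * f \<in> I"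
      using surj mon_std_in_homog[OF t] by blast
    have "std_part I (mon 1 t - l * f) = 0"
      using f(2) std_part_eq_0_iff[OF mon_ideal] ideal_subset_polyR[OF ss_ideal] by blast
    then have "mon 1 t = std_part I (l * f)"
      using std_part_mon[of t I] t by (simp add: std_part_diff std_mons_def)
    then show ?thesis using std_part_mult_in_span[OF mon_ideal l_poly f(1)] span_B by auto
  qed
  then have span: "(\<lambda>m. mon 1 m) ` std_mons n I (Suc d) \<subseteq> mpoly.span ?B" by blast
  have fin_V: "finite ?V" by (rule finite_subset[OF _ finite_std_mons]) auto
  have inj: "inj_on (\<lambda>m. mon (1::'a) m) (std_mons n I (Suc d))"
    by (auto simp: inj_on_def mon_one_eq_iff)
  have "card (std_mons n I (Suc d)) = card ((\<lambda>m. mon (1::'a) m) ` std_mons n I (Suc d))"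
    by (rule card_image[OF inj, symmetric])
  also have "\<dots> \<le> card ?B"
    using mpoly.independent_span_bound[OF finite_imageI[OF fin_V]
        independent_mons[OF finite_std_mons] span] by simp
  also have "\<dots> \<le> card ?V" by (rule card_image_le[OF fin_V])
  finally show ?thesis .
qed

lemma xn_surj_of_mult_surj:
  assumes l: "l \<in> homog n 1" and surj: "\<forall>g\<in>homog n (Suc d). \<exists>f\<in>homog n d. g - l * f \<in> I"
  shows "xn_surj n I d"
proof (rule ccontr)
  assume "\<not> xn_surj n I d"
  from card_shiftable_std_mons_less[OF n this] card_std_mons_Suc_le_of_mult_surj[OF l surj]
  show False by simp
qed

lemma xn_inj_or_surj_0: "xn_inj n I 0 \<or> xn_surj n I 0"
proof (rule disjCI)
  assume "\<not> xn_surj n I 0"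
  then obtain w where w: "w \<in> std_mons n I 1" "Poly_Mapping.lookup w (n - 1) = 0"
    by (auto simp: xn_surj_def)
  then obtain i where i: "w = var_exp i" using mdeg_eq_1_imp by (auto simp: std_mons_def)
  then have "i < n" using w by (auto simp: std_mons_def keys_var_exp)
  show "xn_inj n I 0"
    unfolding xn_inj_def
  proof (intro ballI notI)
    fix u assume u: "u \<in> std_mons n I 0" "mon 1 (last_var_exp n + u) \<in> I"
    then have "u = 0" by (simp add: std_mons_def mdeg_eq_0_iff)
    then have "mon 1 (var_exp i + 0) \<in> I"
      using strongly_stable_exchange_last[OF ss u(2) \<open>i < n\<close>] by simp
    then show False using w i by (simp add: std_mons_def)
  qed
qed

lemma wlp_iff_xn_inj_or_surj: "WLP n I \<longleftrightarrow> (\<forall>d. xn_inj n I d \<or> xn_surj n I d)"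
proof
  assume "WLP n I"
  then obtain l where l: "l \<in> homog n 1" and max_rank: "\<forall>d\<ge>1.
      (\<forall>f\<in>homog n d. l * f \<in> I \<longrightarrow> f \<in> I) \<or> (\<forall>g\<in>homog n (d + 1). \<exists>f\<in>homog n d. g - l * f \<in> I)"
    by (auto simp: WLP_def)
  show "\<forall>d. xn_inj n I d \<or> xn_surj n I d"
  proof
    fix d
    show "xn_inj n I d \<or> xn_surj n I d"
    proof (cases "d = 0")
      case True
      then show ?thesis using xn_inj_or_surj_0 by simp
    next
      case False
      then have "(\<forall>f\<in>homog n d. l * f \<in> I \<longrightarrow> f \<in> I)
          \<or> (\<forall>g\<in>homog n (Suc d). \<exists>f\<in>homog n d. g - l * f \<in> I)"
        using max_rank by simp
      then show ?thesis using xn_inj_of_mult_inj[OF l] xn_surj_of_mult_surj[OF l] by blast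
    qed
  qed
next
  assume inj_or_surj: "\<forall>d. xn_inj n I d \<or> xn_surj n I d"
  have xn: "mon 1 (last_var_exp n) \<in> homog n 1"
    using mon_in_homog[OF keys_last_var_exp[OF n]] by (simp add: mdeg_var_exp)
  show "WLP n I"
    unfolding WLP_def
  proof (intro bexI[OF _ xn] allI impI)
    fix d :: nat
    show "(\<forall>f\<in>homog n d. mon 1 (last_var_exp n) * f \<in> I \<longrightarrow> f \<in> I)
        \<or> (\<forall>g\<in>homog n (d + 1). \<exists>f\<in>homog n d. g - mon 1 (last_var_exp n) * f \<in> I)"
      using inj_or_surj mult_xn_injective[OF n mon_ideal, of d]
        mult_xn_surjective[OF n mon_ideal, of d] by auto
  qed
qed

end

theorem lemma3p4:
  fixes n :: nat and I :: "('a::field_char_0) mpoly set"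
  assumes "1 \<le> n"
    and "strongly_stable n I"
    and "artinian_quot n I"
  shows "WLP n I \<longleftrightarrow>
    (\<exists>k. (\<forall>i<k. hilb n I i < hilb n I (i+1)) \<and> (\<forall>i\<ge>k. hilb n I i \<ge> hilb n I (i+1))
       \<and> ideal_pow n (ideal_gen n {mon 1 (var_exp i) | i. i < n - 1}) (k+1) \<subseteq> I
       \<and> (\<forall>m. min_mon_gen n I m \<and> 0 < Poly_Mapping.lookup m (n - 1) \<longrightarrow> mdeg m \<ge> k + 1))"
proof -
  have mon_ideal: "monomial_ideal n I"
    using assms(2) by (rule strongly_stable_imp_monomial_ideal)
  have pow_iff: "ideal_pow n (low_vars_ideal n) (k + 1) \<subseteq> I \<longleftrightarrow> xn_surj n I k" for k
    unfolding pow_low_vars_ideal_subset_iff[OF monomial_ideal_is_ideal[OF mon_ideal]]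
      xn_surj_iff_low_mons by simp
  have gens_iff: "(\<forall>m. min_mon_gen n I m \<and> 0 < Poly_Mapping.lookup m (n - 1) \<longrightarrow> k + 1 \<le> mdeg m)
      \<longleftrightarrow> (\<forall>d<k. xn_inj n I d)" for k
    using xn_inj_of_min_gen_deg[OF assms(1) mon_ideal] min_gen_deg_of_xn_inj[OF assms(1) mon_ideal]
    by blast
  have "WLP n I \<longleftrightarrow> (\<forall>d. xn_inj n I d \<or> xn_surj n I d)"
    by (rule wlp_iff_xn_inj_or_surj[OF assms(1,2)])
  also have "\<dots> \<longleftrightarrow> (\<exists>k. (\<forall>i<k. hilb n I i < hilb n I (i + 1))
      \<and> (\<forall>i\<ge>k. hilb n I i \<ge> hilb n I (i + 1)) \<and> xn_surj n I k \<and> (\<forall>d<k. xn_inj n I d))"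
    by (rule xn_inj_or_surj_iff_unimodal[OF assms(1) mon_ideal assms(3)])
  finally show ?thesis by (simp only: pow_iff gens_iff)
qed

end
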